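(* Let $T$ be an expanding Markov map with a finite partition. For every $\kappa>0$ and every $x\in[0,1]$, $\mathcal U^\kappa(x)\setminus\{Tx\}\subset\mathcal U^\kappa(Tx)$.
   Context: An expanding Markov map with a finite partition is a map $T:[0,1]\to[0,1]$ for which there are points $0=a_0<\dots<a_Q=1$, with $I(i)=(a_i,a_{i+1})$, such that: (1) there are $n_0\in\mathbb N$, $\rho>1$ with $|(T^{n_0})'|\ge\rho$; (2) $T$ is strictly monotonic on each $I(i)$ and extends to a $C^2$ function on each $\overline{I(i)}$; (3) if $I(j)\cap T(I(k))\ne\emptyset$ then $I(j)\subset T(I(k))$; (4) there is $R$ with $I(j)\subset\bigcup_{n=1}^RT^n(I(k))$ for all $j,k$; (5) for every $k$, $\sup_{(x,y,z)\in I(k)^3}|T''(x)|/(|T'(y)||T'(z)|)<\infty$. For $\kappa>0$, $\mathcal U^\kappa(x)=\bigcup_{i\ge1}\bigcap_{N\ge i}\bigcup_{n=1}^NB(T^nx,N^{-\kappa})$, where $B(z,r)$ is the open ball of center $z$ and radius $r$. *)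

theory Defs
  imports "HOL-Analysis.Analysis"
begin

definition part_int :: "(nat \<Rightarrow> real) \<Rightarrow> nat \<Rightarrow> real set" where
  "part_int a i = {a i <..< a (Suc i)}"

definition expanding_markov :: "(real \<Rightarrow> real) \<Rightarrow> nat \<Rightarrow> (nat \<Rightarrow> real) \<Rightarrow> bool" where
  "expanding_markov T Q a \<longleftrightarrow>
     (\<forall>x\<in>{0..1}. T x \<in> {0..1}) \<and>
     Q \<ge> 1 \<and> a 0 = 0 \<and> a Q = 1 \<and> (\<forall>i<Q. a i < a (Suc i)) \<and>
     \<comment> \<open>(1) expansion of T^n0 wherever the derivative is defined by the branches\<close>
     (\<exists>n0::nat. n0 \<ge> 1 \<and> (\<exists>\<rho>::real. \<rho> > 1 \<and>
        (\<forall>x\<in>{0..1}. (\<forall>k<n0. \<exists>i<Q. (T ^^ k) x \<in> part_int a i) \<longrightarrow>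
           (\<exists>d. ((T ^^ n0) has_real_derivative d) (at x) \<and> \<bar>d\<bar> \<ge> \<rho>)))) \<and>
     \<comment> \<open>(2) strict monotonicity and C^2 extension to the closed interval\<close>
     (\<forall>i<Q. ((\<forall>x\<in>part_int a i. \<forall>y\<in>part_int a i. x < y \<longrightarrow> T x < T y) \<or>
             (\<forall>x\<in>part_int a i. \<forall>y\<in>part_int a i. x < y \<longrightarrow> T x > T y)) \<and>
        (\<exists>g g' g''. (\<forall>x\<in>part_int a i. g x = T x) \<and>
           (\<forall>y\<in>{a i..a (Suc i)}.
               (g has_real_derivative g' y) (at y within {a i..a (Suc i)}) \<and>
               (g' has_real_derivative g'' y) (at y within {a i..a (Suc i)})) \<and>
           continuous_on {a i..a (Suc i)} g'')) \<and>
     \<comment> \<open>(3) Markov property\<close>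
     (\<forall>j<Q. \<forall>k<Q. part_int a j \<inter> T ` part_int a k \<noteq> {} \<longrightarrow>
                    part_int a j \<subseteq> T ` part_int a k) \<and>
     \<comment> \<open>(4) transitivity\<close>
     (\<exists>R::nat. \<forall>j<Q. \<forall>k<Q. part_int a j \<subseteq> (\<Union>n\<in>{1..R}. (T ^^ n) ` part_int a k)) \<and>
     \<comment> \<open>(5) bounded distortion\<close>
     (\<forall>k<Q. \<exists>C::real. \<forall>x\<in>part_int a k. \<forall>y\<in>part_int a k. \<forall>z\<in>part_int a k.
        \<bar>deriv (deriv T) x\<bar> / (\<bar>deriv T y\<bar> * \<bar>deriv T z\<bar>) \<le> C)"

definition U_kappa :: "(real \<Rightarrow> real) \<Rightarrow> real \<Rightarrow> real \<Rightarrow> real set" where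
  "U_kappa T \<kappa> x =
     (\<Union>i\<in>{1::nat..}. \<Inter>N\<in>{i..}. \<Union>n\<in>{1..N}. ball ((T ^^ n) x) (real N powr (-\<kappa>)))"

end

theory Submission
  imports Defs
begin

lemma mem_U_kappa_iff:
  "y \<in> U_kappa T \<kappa> x \<longleftrightarrow>
     (\<forall>\<^sub>F N in sequentially. \<exists>n\<in>{1..N}. dist ((T ^^ n) x) y < real N powr (-\<kappa>))"
proof
  assume "y \<in> U_kappa T \<kappa> x"
  then obtain i where "\<forall>N\<ge>i. \<exists>n\<in>{1..N}. dist ((T ^^ n) x) y < real N powr (-\<kappa>)"
    unfolding U_kappa_def by (auto simp: dist_commute)
  then show "\<forall>\<^sub>F N in sequentially. \<exists>n\<in>{1..N}. dist ((T ^^ n) x) y < real N powr (-\<kappa>)"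
    by (auto simp: eventually_sequentially)
next
  assume "\<forall>\<^sub>F N in sequentially. \<exists>n\<in>{1..N}. dist ((T ^^ n) x) y < real N powr (-\<kappa>)"
  then obtain i where "\<forall>N\<ge>i. \<exists>n\<in>{1..N}. dist ((T ^^ n) x) y < real N powr (-\<kappa>)"
    by (auto simp: eventually_sequentially)
  then have "\<forall>N\<ge>max i 1. \<exists>n\<in>{1..N}. y \<in> ball ((T ^^ n) x) (real N powr (-\<kappa>))"
    by (auto simp: dist_commute)
  then show "y \<in> U_kappa T \<kappa> x"
    unfolding U_kappa_def by (intro UN_I[of "max i 1"]) auto
qed

text \<open>Only the orbit of \<open>x\<close> enters: a point other than \<open>T x\<close> is eventually
  not approached at time \<open>1\<close>, so every later approach is an approach by the orbit of \<open>T x\<close>,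
  with one time step less and at a radius that has only grown.\<close>

lemma U_kappa_minus_image_subset:
  assumes "\<kappa> > 0"
  shows "U_kappa T \<kappa> x - {T x} \<subseteq> U_kappa T \<kappa> (T x)"
proof
  fix y assume y: "y \<in> U_kappa T \<kappa> x - {T x}"
  have "((\<lambda>N. real (Suc N) powr (-\<kappa>)) \<longlongrightarrow> 0) sequentially"
    using assms by (intro tendsto_neg_powr filterlim_compose[OF filterlim_real_sequentially
          filterlim_Suc]) simp
  moreover have "dist (T x) y > 0"
    using y by simp
  ultimately have small: "\<forall>\<^sub>F N in sequentially. real (Suc N) powr (-\<kappa>) < dist (T x) y"
    by (rule order_tendstoD)
  have "\<forall>\<^sub>F N in sequentially. \<exists>n\<in>{1..N}. dist ((T ^^ n) x) y < real N powr (-\<kappa>)"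
    using y by (simp add: mem_U_kappa_iff)
  then have approach: "\<forall>\<^sub>F N in sequentially.
      \<exists>n\<in>{1..Suc N}. dist ((T ^^ n) x) y < real (Suc N) powr (-\<kappa>)"
    by (rule eventually_sequentially_Suc[THEN iffD2])
  have "\<forall>\<^sub>F N in sequentially. \<exists>m\<in>{1..N}. dist ((T ^^ m) (T x)) y < real N powr (-\<kappa>)"
    using small approach eventually_ge_at_top[of 1]
  proof eventually_elim
    case (elim N)
    then obtain n where n: "n \<in> {1..Suc N}"
      and close: "dist ((T ^^ n) x) y < real (Suc N) powr (-\<kappa>)"
      by blast
    have "n \<noteq> 1"
      using close elim(1) by auto
    then obtain m where m: "n = Suc m" "m \<in> {1..N}"
      using n by (cases n) auto
    have "real (Suc N) powr (-\<kappa>) \<le> real N powr (-\<kappa>)"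
      using elim(3) assms by (intro powr_mono2') auto
    moreover have "(T ^^ n) x = (T ^^ m) (T x)"
      using m(1) by (simp only: funpow_Suc_right o_apply)
    ultimately show ?case
      using close m(2) by force
  qed
  then show "y \<in> U_kappa T \<kappa> (T x)"
    by (simp add: mem_U_kappa_iff)
qed

theorem lemma2p1:
  fixes T :: "real \<Rightarrow> real" and Q :: nat and a :: "nat \<Rightarrow> real"
    and \<kappa> x :: real
  assumes "expanding_markov T Q a"
    and "\<kappa> > 0"
    and "x \<in> {0..1}"
  shows "U_kappa T \<kappa> x - {T x} \<subseteq> U_kappa T \<kappa> (T x)"
  using assms(2) by (rule U_kappa_minus_image_subset)

end
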